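(* Let $G$ be a graph with a distinguished vertex $v$. For each $m\ge0$ let $G_m$ be the graph obtained by attaching one endvertex of a new $m$-vertex path to $v$ by an edge (so $G_m$ has $m$ more vertices than $G$), and let $R_m(z)$ be the reciprocal polynomial of $G_m$. Then there is a monic integer polynomial $P(z)$, depending on $G$ and $v$ but not on $m$, such that for all $m\ge2$, $$(y^2-1)R_m(z)=y^{2m}P(z)-P^*(z),$$ where $P^*(z)=z^{\deg P}P(1/z)$.
   Context: Graphs are finite simple graphs; $\chi_G$ is the characteristic polynomial of the adjacency matrix of an $n$-vertex graph $G$. The reciprocal polynomial is $R_G(z)=z^n\chi_G(z+1/z)$ if $G$ is nonbipartite and $R_G(z)=z^{n/2}\chi_G(\sqrt z+1/\sqrt z)$ if $G$ is bipartite. Here $y=\sqrt z$ if the graph ($G$, equivalently each $G_m$) is bipartite, and $y=z$ otherwise. *)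

theory Defs
  imports "Jordan_Normal_Form.Char_Poly"
begin

text \<open>A finite simple graph on the vertex set {0..<n}, given by an edge relation E
  (only its restriction to {0..<n} matters).\<close>

definition simple_graph :: "nat \<Rightarrow> (nat \<Rightarrow> nat \<Rightarrow> bool) \<Rightarrow> bool" where
  "simple_graph n E \<longleftrightarrow> (\<forall>i<n. \<forall>j<n. E i j \<longrightarrow> E j i) \<and> (\<forall>i<n. \<not> E i i)"

definition adj_mat :: "nat \<Rightarrow> (nat \<Rightarrow> nat \<Rightarrow> bool) \<Rightarrow> int mat" where
  "adj_mat n E = mat n n (\<lambda>(i, j). if E i j then 1 else 0)"

definition char_poly_graph :: "nat \<Rightarrow> (nat \<Rightarrow> nat \<Rightarrow> bool) \<Rightarrow> int poly" where
  "char_poly_graph n E = char_poly (adj_mat n E)"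

definition bipartite :: "nat \<Rightarrow> (nat \<Rightarrow> nat \<Rightarrow> bool) \<Rightarrow> bool" where
  "bipartite n E \<longleftrightarrow> (\<exists>c :: nat \<Rightarrow> bool. \<forall>i<n. \<forall>j<n. E i j \<longrightarrow> c i \<noteq> c j)"

text \<open>Nonbipartite: z^n chi(z + 1/z) = sum_k c_k (z^2+1)^k z^(n-k).
  Bipartite: z^(n/2) chi(sqrt z + 1/sqrt z) = sum_k c_k (z+1)^k z^((n-k)/2), where
  only k with n-k even contribute (the other coefficients of chi vanish for bipartite graphs).\<close>
definition recip_poly :: "nat \<Rightarrow> (nat \<Rightarrow> nat \<Rightarrow> bool) \<Rightarrow> int poly" where
  "recip_poly n E =
    (let \<chi> = char_poly_graph n E in
     if bipartite n E
     then (\<Sum>k\<le>n. if even (n - k) then [:coeff \<chi> k:] * [:1, 1:] ^ k * monom 1 ((n - k) div 2) else 0)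
     else (\<Sum>k\<le>n. [:coeff \<chi> k:] * [:1, 0, 1:] ^ k * monom 1 (n - k)))"

text \<open>G_m: attach to vertex v, by an edge, one endvertex of a new path on the m vertices
  n, n+1, ..., n+m-1 (path edges {n+i, n+i+1}, plus the edge {v, n} when m > 0).\<close>
definition path_ext :: "nat \<Rightarrow> (nat \<Rightarrow> nat \<Rightarrow> bool) \<Rightarrow> nat \<Rightarrow> nat \<Rightarrow> nat \<Rightarrow> nat \<Rightarrow> bool" where
  "path_ext n E v m i j \<longleftrightarrow>
     (i < n \<and> j < n \<and> E i j) \<or>
     (0 < m \<and> ((i = v \<and> j = n) \<or> (i = n \<and> j = v))) \<or>
     (n \<le> i \<and> j = i + 1 \<and> j < n + m) \<or>
     (n \<le> j \<and> i = j + 1 \<and> i < n + m)"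

end

theory Submission
  imports Defs
begin

text \<open>
  Expanding det(xI - A) along the row of the last path vertex gives the three-term recurrence
  chi_(m+2) = x chi_(m+1) - chi_m.  The reciprocal transformation turns multiplication by x into
  multiplication by y^2 + 1 and the degree shift by two into multiplication by y^2, so
  R_(m+2) = (y^2 + 1) R_(m+1) - y^2 R_m, a linear recurrence with characteristic roots 1 and y^2.
  Hence (y^2 - 1) R_m = y^(2m) (R_1 - R_0) - (R_1 - y^2 R_0).  Every R_m is palindromic and R_1
  has constant term 1, so P = R_1 - R_0 is monic and its reflection is exactly R_1 - y^2 R_0.
\<close>

subsection \<open>Palindromic polynomials\<close>

definition rev_poly :: "nat \<Rightarrow> 'a::comm_monoid_add poly \<Rightarrow> 'a poly" where
  "rev_poly d p = (\<Sum>i\<le>d. monom (coeff p (d - i)) i)"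

definition palindromic :: "nat \<Rightarrow> 'a::comm_monoid_add poly \<Rightarrow> bool" where
  "palindromic d p \<longleftrightarrow> rev_poly d p = p"

lemma coeff_rev_poly: "coeff (rev_poly d p) i = (if i \<le> d then coeff p (d - i) else 0)"
  unfolding rev_poly_def by (simp add: coeff_sum coeff_monom)

lemma rev_poly_diff: "rev_poly d (p - q) = rev_poly d p - rev_poly d q"
  by (rule poly_eqI) (simp add: coeff_rev_poly)

lemma rev_poly_sum: "rev_poly d (sum f S) = (\<Sum>x\<in>S. rev_poly d (f x))"
  by (rule poly_eqI) (simp add: coeff_rev_poly coeff_sum)

lemma degree_palindromic: "palindromic d p \<Longrightarrow> degree p \<le> d"
  unfolding palindromic_def by (intro degree_le allI impI) (metis coeff_rev_poly not_less)

lemma rev_poly_eq_reflect_poly: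
  fixes p :: "'a::comm_ring_1 poly"
  assumes "degree p \<le> d"
  shows "rev_poly d p = monom 1 (d - degree p) * reflect_poly p"
proof (rule poly_eqI)
  fix i
  consider "d < i" | "i \<le> d" "d - degree p \<le> i" | "i < d - degree p"
    by linarith
  then show "coeff (rev_poly d p) i = coeff (monom 1 (d - degree p) * reflect_poly p) i"
    by cases (use assms in \<open>auto simp: coeff_rev_poly coeff_monom_mult coeff_reflect_poly
        coeff_eq_0 not_le\<close>)
qed

lemma rev_poly_add_shift:
  fixes p :: "'a::comm_ring_1 poly"
  assumes "degree p \<le> d"
  shows "rev_poly (d + e) p = monom 1 e * rev_poly d p"
proof -
  have "monom 1 (d + e - degree p) = monom (1 :: 'a) e * monom 1 (d - degree p)"
    using assms by (simp add: mult_monom add.commute)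
  then show ?thesis
    using assms by (simp add: rev_poly_eq_reflect_poly mult.assoc)
qed

lemma rev_poly_mult:
  fixes p q :: "'a::idom poly"
  assumes "degree p \<le> a" "degree q \<le> b"
  shows "rev_poly (a + b) (p * q) = rev_poly a p * rev_poly b q"
proof (cases "p = 0 \<or> q = 0")
  case True
  then show ?thesis by (auto simp: rev_poly_def)
next
  case False
  then have deg: "degree (p * q) = degree p + degree q"
    by (simp add: degree_mult_eq)
  moreover have "monom 1 (a + b - degree (p * q))
      = monom (1 :: 'a) (a - degree p) * monom 1 (b - degree q)"
    using assms deg by (simp add: mult_monom)
  ultimately show ?thesis
    using assms by (simp add: rev_poly_eq_reflect_poly reflect_poly_mult ac_simps)
qed

lemma palindromic_mult:
  fixes p q :: "'a::idom poly"
  assumes "palindromic a p" "palindromic b q"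
  shows "palindromic (a + b) (p * q)"
  using rev_poly_mult[OF degree_palindromic[OF assms(1)] degree_palindromic[OF assms(2)]] assms
  by (simp add: palindromic_def)

lemma palindromic_power:
  fixes p :: "'a::idom poly"
  assumes "palindromic a p"
  shows "palindromic (a * k) (p ^ k)"
proof (induction k)
  case 0
  show ?case by (simp add: palindromic_def poly_eq_iff coeff_rev_poly)
next
  case (Suc k)
  then show ?case
    using palindromic_mult[OF assms Suc.IH] by (simp add: ac_simps)
qed

lemma palindromic_sum:
  "(\<And>x. x \<in> S \<Longrightarrow> palindromic d (f x)) \<Longrightarrow> palindromic d (sum f S)"
  unfolding palindromic_def by (simp add: rev_poly_sum)

lemma palindromic_0 [simp]: "palindromic d 0"
  by (simp add: palindromic_def rev_poly_def)

lemma palindromic_const: "palindromic 0 [:c:]"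
  by (auto simp: palindromic_def poly_eq_iff coeff_rev_poly coeff_pCons split: nat.split)

lemma palindromic_monom: "palindromic (2 * j) (monom 1 j)"
  by (auto simp: palindromic_def poly_eq_iff coeff_rev_poly coeff_monom)

lemma palindromic_monom_plus_1: "palindromic s (monom 1 s + 1)"
  by (auto simp: palindromic_def poly_eq_iff coeff_rev_poly coeff_monom)

lemma palindromic_diff_monic:
  fixes R\<^sub>0 R\<^sub>1 :: "'a::comm_ring_1 poly"
  assumes "palindromic d R\<^sub>0" "palindromic (d + s) R\<^sub>1" "s > 0" "coeff R\<^sub>1 0 = 1"
  shows "degree (R\<^sub>1 - R\<^sub>0) = d + s" "lead_coeff (R\<^sub>1 - R\<^sub>0) = 1"
proof -
  have "coeff R\<^sub>1 (d + s) = coeff (rev_poly (d + s) R\<^sub>1) (d + s)"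
    using assms(2) unfolding palindromic_def by simp
  also have "\<dots> = 1"
    using assms(4) by (simp add: coeff_rev_poly)
  finally have "coeff (R\<^sub>1 - R\<^sub>0) (d + s) = 1"
    using degree_palindromic[OF assms(1)] assms(3) by (simp add: coeff_eq_0)
  moreover have "degree (R\<^sub>1 - R\<^sub>0) \<le> d + s"
    using degree_palindromic[OF assms(1)] degree_palindromic[OF assms(2)]
    by (intro degree_diff_le) auto
  ultimately show deg: "degree (R\<^sub>1 - R\<^sub>0) = d + s"
    by (metis le_antisym le_degree zero_neq_one)
  with \<open>coeff (R\<^sub>1 - R\<^sub>0) (d + s) = 1\<close> show "lead_coeff (R\<^sub>1 - R\<^sub>0) = 1"
    by simp
qed

lemma palindromic_diff_reflect:
  fixes R\<^sub>0 R\<^sub>1 :: "'a::comm_ring_1 poly"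
  assumes "palindromic d R\<^sub>0" "palindromic (d + s) R\<^sub>1" "s > 0" "coeff R\<^sub>1 0 = 1"
  shows "reflect_poly (R\<^sub>1 - R\<^sub>0) = R\<^sub>1 - monom 1 s * R\<^sub>0"
proof -
  have "reflect_poly (R\<^sub>1 - R\<^sub>0) = rev_poly (d + s) (R\<^sub>1 - R\<^sub>0)"
    using rev_poly_eq_reflect_poly[of "R\<^sub>1 - R\<^sub>0" "d + s"] palindromic_diff_monic(1)[OF assms]
    by simp
  also have "\<dots> = R\<^sub>1 - monom 1 s * rev_poly d R\<^sub>0"
    using assms(2) degree_palindromic[OF assms(1)]
    by (simp add: rev_poly_diff rev_poly_add_shift palindromic_def)
  finally show ?thesis
    using assms(1) by (simp add: palindromic_def)
qed

subsection \<open>The reciprocal transformation\<close>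

text \<open>
  With y^2 = z^s, y_power s j is y^j when this is a power of z, and 0 otherwise.
  For p of degree N, recip_trans s N p is y^N p(y + 1/y) with the non-integral powers
  of z dropped; s = 1 gives the bipartite, s = 2 the nonbipartite reciprocal polynomial.
\<close>

definition y_power :: "nat \<Rightarrow> nat \<Rightarrow> 'a::comm_ring_1 poly" where
  "y_power s j = (if even (s * j) then monom 1 (s * j div 2) else 0)"

definition recip_trans :: "nat \<Rightarrow> nat \<Rightarrow> 'a::comm_ring_1 poly \<Rightarrow> 'a poly" where
  "recip_trans s N p =
    (\<Sum>k\<le>N. Polynomial.smult (coeff p k) ((monom 1 s + 1) ^ k * y_power s (N - k)))"

lemma y_power_Suc_Suc: "y_power s (Suc (Suc j)) = monom 1 s * y_power s j"
proof -
  have "s * Suc (Suc j) = s * j + 2 * s"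
    by simp
  then show ?thesis
    unfolding y_power_def by (simp only:) (simp add: mult_monom add.commute)
qed

lemma palindromic_y_power: "palindromic (s * j) (y_power s j)"
  using palindromic_monom[of "s * j div 2"] by (auto simp: y_power_def)

lemma poly_y_power_0:
  assumes "s > 0"
  shows "poly (y_power s j) 0 = (if j = 0 then 1 else 0)"
proof -
  have "s * j div 2 > 0" if "j > 0" "even (s * j)"
    using that assms by (auto elim!: evenE)
  then show ?thesis
    by (auto simp: y_power_def poly_monom zero_power)
qed

lemma recip_trans_diff: "recip_trans s N (p - q) = recip_trans s N p - recip_trans s N q"
  unfolding recip_trans_def by (simp add: smult_diff_left sum_subtractf)

lemma recip_trans_pCons_0:
  "recip_trans s (Suc N) (pCons 0 p) = (monom 1 s + 1) * recip_trans s N p"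
  unfolding recip_trans_def
  by (subst sum.atMost_Suc_shift) (simp add: sum_distrib_left ac_simps del: sum.atMost_Suc)

lemma recip_trans_Suc_Suc:
  assumes "degree p \<le> N"
  shows "recip_trans s (Suc (Suc N)) p = monom 1 s * recip_trans s N p"
proof -
  have "recip_trans s (Suc (Suc N)) p
      = (\<Sum>k\<le>N. Polynomial.smult (coeff p k)
          ((monom 1 s + 1) ^ k * y_power s (Suc (Suc N) - k)))"
    unfolding recip_trans_def using assms by (simp add: coeff_eq_0)
  also have "\<dots> = (\<Sum>k\<le>N. monom 1 s
      * Polynomial.smult (coeff p k) ((monom 1 s + 1) ^ k * y_power s (N - k)))"
    by (intro sum.cong) (auto simp: Suc_diff_le y_power_Suc_Suc ac_simps)
  finally show ?thesis
    unfolding recip_trans_def by (simp add: sum_distrib_left)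
qed

lemma palindromic_recip_trans:
  fixes p :: "'a::idom poly"
  shows "palindromic (s * N) (recip_trans s N p)"
  unfolding recip_trans_def
proof (rule palindromic_sum)
  fix k
  assume "k \<in> {..N}"
  then have "s * N = 0 + (s * k + s * (N - k))"
    by (simp add: algebra_simps)
  moreover have "palindromic (0 + (s * k + s * (N - k)))
      ([:coeff p k:] * ((monom 1 s + 1) ^ k * y_power s (N - k)))"
    by (intro palindromic_mult palindromic_const palindromic_power palindromic_monom_plus_1
        palindromic_y_power)
  ultimately show "palindromic (s * N)
      (Polynomial.smult (coeff p k) ((monom 1 s + 1) ^ k * y_power s (N - k)))"
    by simp
qed

lemma coeff_0_recip_trans: "s > 0 \<Longrightarrow> coeff (recip_trans s N p) 0 = coeff p N"
  by (simp add: poly_0_coeff_0[symmetric] recip_trans_def poly_sum poly_y_power_0 poly_monom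
      zero_power if_distrib cong: if_cong)

subsection \<open>Solving the three-term recurrence\<close>

lemma recurrence_roots_1_W:
  fixes R :: "nat \<Rightarrow> 'a::comm_ring_1"
  assumes rec: "\<And>m. R (Suc (Suc m)) = (W + 1) * R (Suc m) - W * R m"
  shows "(W - 1) * R m = W ^ m * (R 1 - R 0) - (R 1 - W * R 0)"
proof -
  have "R (Suc (Suc m)) - R (Suc m) = W * (R (Suc m) - R m)" for m
    by (simp add: rec algebra_simps)
  then have diff: "R (Suc m) - R m = W ^ m * (R 1 - R 0)" for m
    by (induction m) (simp_all add: mult.assoc)
  have "R (Suc (Suc m)) - W * R (Suc m) = R (Suc m) - W * R m" for m
    by (simp add: rec algebra_simps)
  then have const: "R (Suc m) - W * R m = R 1 - W * R 0" for m
    by (induction m) simp_all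
  have "(W - 1) * R m = (R (Suc m) - R m) - (R (Suc m) - W * R m)"
    by (simp add: algebra_simps)
  also have "\<dots> = W ^ m * (R 1 - R 0) - (R 1 - W * R 0)"
    by (simp only: diff const)
  finally show ?thesis .
qed

lemma recip_trans_recurrence_closed_form:
  fixes \<chi> :: "nat \<Rightarrow> 'a::idom poly"
  assumes "s > 0"
    and deg: "\<And>m. degree (\<chi> m) = n + m" and monic: "\<And>m. lead_coeff (\<chi> m) = 1"
    and rec: "\<And>m. \<chi> (Suc (Suc m)) = [:0, 1:] * \<chi> (Suc m) - \<chi> m"
  shows "\<exists>P. lead_coeff P = 1 \<and>
    (\<forall>m. (monom 1 s - 1) * recip_trans s (n + m) (\<chi> m) = monom 1 (s * m) * P - reflect_poly P)"
proof -
  define W :: "'a poly" where "W = monom 1 s"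
  define R where "R m = recip_trans s (n + m) (\<chi> m)" for m
  have "R (Suc (Suc m)) = (W + 1) * R (Suc m) - W * R m" for m
    using deg[of m]
    by (simp add: R_def W_def rec recip_trans_diff recip_trans_pCons_0 recip_trans_Suc_Suc)
  then have closed: "(W - 1) * R m = W ^ m * (R 1 - R 0) - (R 1 - W * R 0)" for m
    by (rule recurrence_roots_1_W)
  have pal\<^sub>0: "palindromic (s * n) (R 0)" and pal\<^sub>1: "palindromic (s * n + s) (R 1)"
    using palindromic_recip_trans[of s "n + 0"] palindromic_recip_trans[of s "n + 1"]
    by (simp_all add: R_def algebra_simps)
  have "coeff (R 1) 0 = 1"
    unfolding R_def coeff_0_recip_trans[OF \<open>s > 0\<close>] using monic[of 1] deg[of 1] by simp
  note palindromic_diff_monic(2)[OF pal\<^sub>0 pal\<^sub>1 \<open>s > 0\<close> this]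
    and palindromic_diff_reflect[OF pal\<^sub>0 pal\<^sub>1 \<open>s > 0\<close> this]
  with closed show ?thesis
    by (intro exI[of _ "R 1 - R 0"]) (simp add: R_def W_def monom_power mult.commute)
qed

subsection \<open>Characteristic polynomials of the graphs with a pendant path\<close>

lemma det_expand_last_two:
  fixes A :: "'a::comm_ring_1 mat"
  assumes A: "A \<in> carrier_mat (Suc (Suc K)) (Suc (Suc K))"
    and row: "\<And>j. j < K \<Longrightarrow> A $$ (Suc K, j) = 0"
    and col: "\<And>i. i < K \<Longrightarrow> A $$ (i, Suc K) = 0"
  shows "det A = A $$ (Suc K, Suc K) * det (mat_delete A (Suc K) (Suc K))
    - A $$ (Suc K, K) * A $$ (K, Suc K) * det (mat_delete (mat_delete A (Suc K) (Suc K)) K K)"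
proof -
  let ?B = "mat_delete A (Suc K) K"
  have B: "?B \<in> carrier_mat (Suc K) (Suc K)"
    using mat_delete_carrier[OF A] by simp
  have "det A = (\<Sum>j<Suc (Suc K). A $$ (Suc K, j) * cofactor A (Suc K) j)"
    by (rule laplace_expansion_row[OF A]) simp
  also have "\<dots> = A $$ (Suc K, Suc K) * cofactor A (Suc K) (Suc K)
      + A $$ (Suc K, K) * cofactor A (Suc K) K"
    using row by (simp add: sum.lessThan_Suc)
  finally have det_A: "det A = A $$ (Suc K, Suc K) * det (mat_delete A (Suc K) (Suc K))
      - A $$ (Suc K, K) * det ?B"
    by (simp add: cofactor_def)
  have "det ?B = (\<Sum>i<Suc K. ?B $$ (i, K) * cofactor ?B i K)"
    by (rule laplace_expansion_column[OF B]) simp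
  also have "\<dots> = A $$ (K, Suc K) * det (mat_delete ?B K K)"
    using col A by (simp add: sum.lessThan_Suc mat_delete_def cofactor_def)
  also have "mat_delete ?B K K = mat_delete (mat_delete A (Suc K) (Suc K)) K K"
    using A by (intro eq_matI) (auto simp: mat_delete_def)
  finally show ?thesis
    using det_A by simp
qed

lemma char_poly_matrix_adj_mat_index:
  "i < N \<Longrightarrow> j < N \<Longrightarrow> char_poly_matrix (adj_mat N E) $$ (i, j) =
     (if i = j then [:0, 1:] else 0) + (if E i j then [:-1:] else 0)"
  unfolding char_poly_matrix_def adj_mat_def by auto

lemma mat_delete_last_char_poly_matrix:
  assumes "\<And>i j. i < N \<Longrightarrow> j < N \<Longrightarrow> E i j = E' i j"
  shows "mat_delete (char_poly_matrix (adj_mat (Suc N) E)) N N = char_poly_matrix (adj_mat N E')"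
  using assms
  by (intro eq_matI) (auto simp: mat_delete_def char_poly_matrix_adj_mat_index,
      auto simp: char_poly_matrix_def adj_mat_def)

lemma char_poly_path_ext_Suc_Suc:
  assumes "v < n"
  shows "char_poly_graph (n + Suc (Suc k)) (path_ext n E v (Suc (Suc k))) =
    [:0, 1:] * char_poly_graph (n + Suc k) (path_ext n E v (Suc k))
    - char_poly_graph (n + k) (path_ext n E v k)"
proof -
  let ?A = "char_poly_matrix (adj_mat (Suc (Suc (n + k))) (path_ext n E v (Suc (Suc k))))"
  have A: "?A \<in> carrier_mat (Suc (Suc (n + k))) (Suc (Suc (n + k)))"
    by (simp add: char_poly_matrix_def adj_mat_def)
  have del\<^sub>1: "mat_delete ?A (Suc (n + k)) (Suc (n + k))
      = char_poly_matrix (adj_mat (Suc (n + k)) (path_ext n E v (Suc k)))"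
    by (rule mat_delete_last_char_poly_matrix) (auto simp: path_ext_def)
  have del\<^sub>2: "mat_delete (char_poly_matrix (adj_mat (Suc (n + k)) (path_ext n E v (Suc k))))
      (n + k) (n + k) = char_poly_matrix (adj_mat (n + k) (path_ext n E v k))"
    by (rule mat_delete_last_char_poly_matrix) (auto simp: path_ext_def)
  have "det ?A =
      ?A $$ (Suc (n + k), Suc (n + k)) * det (mat_delete ?A (Suc (n + k)) (Suc (n + k)))
      - ?A $$ (Suc (n + k), n + k) * ?A $$ (n + k, Suc (n + k))
        * det (mat_delete (mat_delete ?A (Suc (n + k)) (Suc (n + k))) (n + k) (n + k))"
    by (rule det_expand_last_two[OF A])
      (use assms in \<open>auto simp: char_poly_matrix_adj_mat_index path_ext_def\<close>)
  then show ?thesis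
    using assms
    by (simp add: del\<^sub>1 del\<^sub>2 char_poly_graph_def char_poly_def char_poly_matrix_adj_mat_index
        path_ext_def)
qed

lemma bipartite_path_ext:
  assumes "v < n"
  shows "bipartite (n + m) (path_ext n E v m) \<longleftrightarrow> bipartite n E"
proof
  assume "bipartite (n + m) (path_ext n E v m)"
  then obtain c :: "nat \<Rightarrow> bool"
    where "\<forall>i<n + m. \<forall>j<n + m. path_ext n E v m i j \<longrightarrow> c i \<noteq> c j"
    unfolding bipartite_def by blast
  then show "bipartite n E"
    unfolding bipartite_def by (intro exI[of _ c]) (auto simp: path_ext_def)
next
  assume "bipartite n E"
  then obtain c :: "nat \<Rightarrow> bool" where c: "\<forall>i<n. \<forall>j<n. E i j \<longrightarrow> c i \<noteq> c j"
    unfolding bipartite_def by blast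
  define c' where "c' i = (if i < n then c i else odd (i - n) = c v)" for i
  have "c' i \<noteq> c' j" if "path_ext n E v m i j" for i j
    using that c assms by (auto simp: path_ext_def c'_def Suc_diff_le)
  then show "bipartite (n + m) (path_ext n E v m)"
    unfolding bipartite_def by blast
qed

lemma recip_poly_eq_recip_trans:
  "recip_poly N E = recip_trans (if bipartite N E then 1 else 2) N (char_poly_graph N E)"
proof -
  have "[:1, 1:] = monom 1 1 + (1 :: int poly)" "[:1, 0, 1:] = monom 1 2 + (1 :: int poly)"
    by (simp_all add: monom_Suc numeral_2_eq_2 one_pCons)
  then show ?thesis
    unfolding recip_poly_def recip_trans_def y_power_def Let_def
    by (auto intro!: sum.cong)
qed

theorem lemma10:
  fixes n :: nat and E :: "nat \<Rightarrow> nat \<Rightarrow> bool" and v :: nat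
  assumes "simple_graph n E" and "v < n"
  shows "\<exists>P :: int poly. lead_coeff P = 1 \<and>
           (\<forall>m\<ge>2. (if bipartite n E then [:-1, 1:] else [:-1, 0, 1:])
                      * recip_poly (n + m) (path_ext n E v m)
                    = (if bipartite n E then monom 1 m else monom 1 (2 * m)) * P - reflect_poly P)"
proof -
  define s :: nat where "s = (if bipartite n E then 1 else 2)"
  define \<chi> where "\<chi> m = char_poly_graph (n + m) (path_ext n E v m)" for m
  have "s > 0"
    by (simp add: s_def)
  have deg: "degree (\<chi> m) = n + m" and monic: "lead_coeff (\<chi> m) = 1" for m
    using degree_monic_char_poly[of "adj_mat (n + m) (path_ext n E v m)" "n + m"]
    by (auto simp: \<chi>_def char_poly_graph_def adj_mat_def)
  have rec: "\<chi> (Suc (Suc m)) = [:0, 1:] * \<chi> (Suc m) - \<chi> m" for m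
    using char_poly_path_ext_Suc_Suc[OF assms(2)] by (simp add: \<chi>_def)
  obtain P :: "int poly" where "lead_coeff P = 1" and
    closed: "\<forall>m. (monom 1 s - 1) * recip_trans s (n + m) (\<chi> m)
      = monom 1 (s * m) * P - reflect_poly P"
    using recip_trans_recurrence_closed_form[where \<chi> = \<chi>, OF \<open>s > 0\<close> deg monic rec] by blast
  have "recip_poly (n + m) (path_ext n E v m) = recip_trans s (n + m) (\<chi> m)" for m
    by (simp add: recip_poly_eq_recip_trans bipartite_path_ext[OF assms(2)] s_def \<chi>_def)
  moreover have "monom 1 s - 1 = (if bipartite n E then [:-1, 1:] else [:-1, 0, 1:] :: int poly)"
    by (simp add: s_def monom_Suc numeral_2_eq_2 one_pCons)
  ultimately show ?thesis
    using \<open>lead_coeff P = 1\<close> closed by (auto simp: s_def)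
qed

end
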